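(* Let $U,V$ be Banach spaces, $L=L(V,U)$ the space of bounded linear maps with operator norm, $T>0$, $\alpha,\gamma\in(0,1]$ with $\alpha+\gamma>1$, and $\delta>0$. Let $F:[0,T]\times C^{\alpha}([0,T],U)\to L$ be $\delta$-non-anticipating and such that for each $Z\in C^{\alpha}([0,T],U)$ the map $t\mapsto F(t,Z)$ is $\gamma$-Hölder continuous. Let $X\in C^{\alpha}([0,T],V)$. Then for each $y_0\in U$ there is a unique $Y\in C^{\alpha}([0,T],U)$ such that $$Y_t=y_0+\int_0^tF(u,Y)\,dX_u,\qquad t\in[0,T],$$ where the integral is a Young integral.
   Context: $C^{\alpha}([0,T],U)$ denotes the $\alpha$-Hölder continuous paths. For $Y\in C([0,T],U)$ and $r\in[0,T]$, $\mathcal{Y}_r\in C([0,T],U)$ is defined by $\mathcal{Y}_r(x):=Y_{r\wedge x}$. $F$ is $\delta$-non-anticipating if $F(t,Y)=F(t,\mathcal{Y}_{(t-\delta)_+})$ for all $Y$ and all $t\in[0,T]$, where $(a)_+=\max(a,0)$. Young integral: if $W\in C^{\gamma}([a,b],L)$ and $X\in C^{\alpha}([a,b],V)$ with $\alpha+\gamma>1$, $\int_a^bW_u\,dX_u$ is the limit of Riemann sums $\sum_iW_{s_i}(X_{s_{i+1}}-X_{s_i})$ over partitions of $[a,b]$ as the mesh tends to $0$. *)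

theory Defs
  imports "HOL-Analysis.Analysis"
begin

definition holder_on :: "real \<Rightarrow> real \<Rightarrow> (real \<Rightarrow> 'a::real_normed_vector) \<Rightarrow> bool" where
  "holder_on \<alpha> T f \<longleftrightarrow> (\<exists>C. \<forall>s\<in>{0..T}. \<forall>t\<in>{0..T}. norm (f t - f s) \<le> C * \<bar>t - s\<bar> powr \<alpha>)"

text \<open>Elements of C^alpha([0,T],U), represented as functions on the reals that are
  alpha-Hoelder on [0,T] and constant-extended outside [0,T] (so that a path is
  determined by its values on [0,T]).\<close>
definition holder_path :: "real \<Rightarrow> real \<Rightarrow> (real \<Rightarrow> 'a::real_normed_vector) \<Rightarrow> bool" where
  "holder_path \<alpha> T f \<longleftrightarrow> holder_on \<alpha> T f \<and> (\<forall>x. f x = f (max 0 (min T x)))"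

definition stopped :: "(real \<Rightarrow> 'a) \<Rightarrow> real \<Rightarrow> real \<Rightarrow> 'a" where
  "stopped Y r = (\<lambda>x. Y (min r x))"

definition non_anticipating ::
  "real \<Rightarrow> real \<Rightarrow> real \<Rightarrow> (real \<Rightarrow> (real \<Rightarrow> 'u::real_normed_vector) \<Rightarrow> 'b) \<Rightarrow> bool" where
  "non_anticipating \<alpha> T \<delta> F \<longleftrightarrow>
     (\<forall>t\<in>{0..T}. \<forall>Y. holder_path \<alpha> T Y \<longrightarrow> F t Y = F t (stopped Y (max (t - \<delta>) 0)))"

definition partition_of :: "real \<Rightarrow> real \<Rightarrow> real list \<Rightarrow> bool" where
  "partition_of a b p \<longleftrightarrow> p \<noteq> [] \<and> hd p = a \<and> last p = b \<and> sorted_wrt (<) p"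

definition mesh_less :: "real list \<Rightarrow> real \<Rightarrow> bool" where
  "mesh_less p \<eta> \<longleftrightarrow> (\<forall>i < length p - 1. p ! (i+1) - p ! i < \<eta>)"

definition riemann_sum ::
  "(real \<Rightarrow> ('v::real_normed_vector \<Rightarrow>\<^sub>L 'u::real_normed_vector)) \<Rightarrow> (real \<Rightarrow> 'v) \<Rightarrow> real list \<Rightarrow> 'u" where
  "riemann_sum W X p = (\<Sum>i < length p - 1. blinfun_apply (W (p ! i)) (X (p ! (i+1)) - X (p ! i)))"

definition has_young_integral ::
  "(real \<Rightarrow> ('v::real_normed_vector \<Rightarrow>\<^sub>L 'u::real_normed_vector)) \<Rightarrow> (real \<Rightarrow> 'v) \<Rightarrow> real \<Rightarrow> real \<Rightarrow> 'u \<Rightarrow> bool" where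
  "has_young_integral W X a b I \<longleftrightarrow>
     (\<forall>\<epsilon>>0. \<exists>\<eta>>0. \<forall>p. partition_of a b p \<and> mesh_less p \<eta> \<longrightarrow> norm (riemann_sum W X p - I) < \<epsilon>)"

end

theory Submission
  imports Defs
begin

text \<open>Young's sewing lemma: if a germ \<Xi>(s,t) has defect \<Xi>(x,z) - \<Xi>(x,y) - \<Xi>(y,z) of order
  (z - x) powr \<theta> with \<theta> > 1, its Riemann sums converge as the mesh tends to 0, and the limit differs
  from \<Xi>(s,t) by O((t - s) powr \<theta>). For \<Xi>(s,t) = W s (X t - X s) with W \<gamma>-Hoelder and X \<alpha>-Hoelder
  the defect is (W s - W y)(X t - X y), so \<theta> = \<alpha> + \<gamma>; this yields the Young integral and shows that
  t \<mapsto> \<integral>[0,t] W dX is again \<alpha>-Hoelder. Hence the Picard map Y \<mapsto> y0 + \<integral>[0,t] F(u,Y) dX acts on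
  \<alpha>-Hoelder paths. Because F is \<delta>-non-anticipating, the image on [0, r + \<delta>] only depends on Y
  on [0, r], so after N + 1 iterations with N \<delta> \<ge> T all starting paths lead to the same path: the
  unique fixed point, i.e. the unique solution. No contraction estimate is needed.\<close>

section \<open>Partitions as finite sets\<close>

text \<open>Partitions are handled as finite sets of points rather than as the lists of the definition of
  the Young integral, so that refining, merging and deleting points are set operations. The
  successor next_in Q x is Min {} (unspecified) when x has none, hence the side conditions x < b.\<close>

definition next_in :: "real set \<Rightarrow> real \<Rightarrow> real" where
  "next_in Q x = Min {y\<in>Q. x < y}"

definition fin_partition :: "real \<Rightarrow> real \<Rightarrow> real set \<Rightarrow> bool" where
  "fin_partition a b Q \<longleftrightarrow> finite Q \<and> a \<in> Q \<and> b \<in> Q \<and> Q \<subseteq> {a..b}"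

definition germ_sum :: "(real \<Rightarrow> real \<Rightarrow> 'a::real_normed_vector) \<Rightarrow> real \<Rightarrow> real set \<Rightarrow> 'a" where
  "germ_sum \<Xi> b Q = (\<Sum>x\<in>Q - {b}. \<Xi> x (next_in Q x))"

lemma next_in_bounds:
  assumes "finite Q" "y \<in> Q" "x < y"
  shows "next_in Q x \<in> Q" "x < next_in Q x" "next_in Q x \<le> y"
proof -
  have f: "finite {y\<in>Q. x < y}" "{y\<in>Q. x < y} \<noteq> {}" using assms by auto
  have "next_in Q x \<in> {y\<in>Q. x < y}" unfolding next_in_def using Min_in[OF f] .
  thus "next_in Q x \<in> Q" "x < next_in Q x" by auto
  show "next_in Q x \<le> y" unfolding next_in_def using f assms by (intro Min_le) auto
qed

lemma next_in_eqI:
  assumes "finite Q" "z \<in> Q" "x < z" "\<And>w. w \<in> Q \<Longrightarrow> x < w \<Longrightarrow> z \<le> w"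
  shows "next_in Q x = z"
  unfolding next_in_def using assms by (intro Min_eqI) auto

lemma fin_partition_le: "fin_partition a b Q \<Longrightarrow> a \<le> b"
  by (auto simp: fin_partition_def)

lemma fin_partition_singleton: "fin_partition a a Q \<Longrightarrow> Q = {a}"
  by (auto simp: fin_partition_def)

lemma next_in_partition:
  assumes "fin_partition a b Q" "x \<in> Q - {b}"
  shows "next_in Q x \<in> Q" "x < next_in Q x" "next_in Q x \<le> b"
proof -
  have "x < b" using assms by (auto simp: fin_partition_def)
  then show "next_in Q x \<in> Q" "x < next_in Q x" "next_in Q x \<le> b"
    using next_in_bounds[of Q b x] assms by (auto simp: fin_partition_def)
qed

lemma next_in_strict_mono:
  assumes "fin_partition a b Q" "x \<in> Q - {b}" "y \<in> Q - {b}" "x < y"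
  shows "next_in Q x < next_in Q y"
  using next_in_bounds(3)[of Q y x] next_in_partition[OF assms(1,3)] assms
  by (auto simp: fin_partition_def)

lemma inj_on_next_in:
  assumes "fin_partition a b Q"
  shows "inj_on (next_in Q) (Q - {b})"
  by (rule inj_onI, rule ccontr) (metis linorder_neqE_linordered_idom less_irrefl next_in_strict_mono[OF assms])

lemma germ_sum_two_points:
  assumes "x < y" shows "germ_sum \<Xi> y {x,y} = \<Xi> x y"
proof -
  have "next_in {x,y} x = y" using assms by (intro next_in_eqI) auto
  moreover have "{x,y} - {y} = {x}" using assms by auto
  ultimately show ?thesis by (simp add: germ_sum_def)
qed

lemma fin_partition_interior_point:
  assumes "fin_partition a b Q" "a < b" "Q \<noteq> {a,b}"
  obtains w where "w \<in> Q" "a < w" "w < b"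
proof -
  have "Q \<subseteq> {a..b}" "a \<in> Q" "b \<in> Q" using assms by (auto simp: fin_partition_def)
  then obtain w where "w \<in> Q" "w \<noteq> a" "w \<noteq> b" using assms(3) by blast
  then show ?thesis using that \<open>Q \<subseteq> {a..b}\<close> by force
qed

lemma next_in_delete_next:
  assumes Q: "fin_partition a b Q" and x: "x \<in> Q" "x < b" and ub: "next_in Q x < b"
    and z: "z \<in> Q - {next_in Q x}" "z < b"
  shows "next_in (Q - {next_in Q x}) z = (if z = x then next_in Q (next_in Q x) else next_in Q z)"
proof -
  have fQ: "finite Q" and bQ: "b \<in> Q" using Q by (auto simp: fin_partition_def)
  define u where "u = next_in Q x"
  have u: "u \<in> Q" "x < u" and ule: "\<And>w. w \<in> Q \<Longrightarrow> x < w \<Longrightarrow> u \<le> w"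
    using next_in_bounds[OF fQ bQ x(2)] next_in_bounds(3)[OF fQ] unfolding u_def by auto
  have ub': "u < b" using ub unfolding u_def .
  show ?thesis
  proof (cases "z = x")
    case True
    have v: "next_in Q u \<in> Q" "u < next_in Q u" and vle: "\<And>w. w \<in> Q \<Longrightarrow> u < w \<Longrightarrow> next_in Q u \<le> w"
      using next_in_bounds[OF fQ bQ ub'] next_in_bounds(3)[OF fQ] by auto
    have "next_in (Q - {u}) x = next_in Q u"
    proof (rule next_in_eqI)
      fix w assume "w \<in> Q - {u}" "x < w"
      then show "next_in Q u \<le> w" using ule vle by force
    qed (use fQ v u in auto)
    then show ?thesis using True unfolding u_def by simp
  next
    case False
    have zQ: "z \<in> Q" "z \<noteq> u" using z(1) unfolding u_def by auto
    have m: "next_in Q z \<in> Q" "z < next_in Q z" and mle: "\<And>w. w \<in> Q \<Longrightarrow> z < w \<Longrightarrow> next_in Q z \<le> w"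
      using next_in_bounds[OF fQ bQ z(2)] next_in_bounds(3)[OF fQ] by auto
    have "next_in Q z \<noteq> u"
    proof (cases "z < x")
      case True then show ?thesis using mle[OF x(1) True] u by auto
    next
      case False then have "x < z" using \<open>z \<noteq> x\<close> by simp
      then have "u \<le> z" using ule zQ by simp
      then show ?thesis using m by auto
    qed
    then have "next_in (Q - {u}) z = next_in Q z"
      by (intro next_in_eqI) (use fQ m mle in auto)
    then show ?thesis using False unfolding u_def by simp
  qed
qed

lemma germ_sum_delete_point:
  assumes Q: "fin_partition a b Q" and x: "x \<in> Q" "x < b" and ub: "next_in Q x < b"
  defines "u \<equiv> next_in Q x" and "v \<equiv> next_in Q (next_in Q x)"
  shows "germ_sum \<Xi> b Q = germ_sum \<Xi> b (Q - {u}) + (\<Xi> x u + \<Xi> u v - \<Xi> x v)"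
proof -
  have fQ: "finite Q" and bQ: "b \<in> Q" using Q by (auto simp: fin_partition_def)
  have xu: "x < u" and uQ: "u \<in> Q" using next_in_bounds[OF fQ bQ x(2)] unfolding u_def by auto
  define R where "R = Q - {b} - {u} - {x}"
  have fR: "finite R" using fQ unfolding R_def by simp
  have QR: "Q - {b} = insert x (insert u R)" "x \<notin> insert u R" "u \<notin> R"
    using x uQ xu ub unfolding R_def u_def by auto
  have PR: "Q - {u} - {b} = insert x R" "x \<notin> R" using x xu unfolding R_def by auto
  have next_x: "next_in (Q - {u}) x = v"
    using next_in_delete_next[OF Q x ub, of x] x xu unfolding u_def v_def by simp
  have next_R: "next_in (Q - {u}) z = next_in Q z" if "z \<in> R" for z
    using next_in_delete_next[OF Q x ub, of z] that Q unfolding R_def u_def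
    by (auto simp: fin_partition_def)
  have "germ_sum \<Xi> b (Q - {u}) = \<Xi> x v + (\<Sum>z\<in>R. \<Xi> z (next_in Q z))"
    unfolding germ_sum_def PR(1) using PR(2) fR next_x next_R by simp
  moreover have "germ_sum \<Xi> b Q = \<Xi> x u + \<Xi> u v + (\<Sum>z\<in>R. \<Xi> z (next_in Q z))"
    unfolding germ_sum_def QR(1) using QR(2,3) fR unfolding u_def v_def by (simp add: add.assoc)
  ultimately show ?thesis by (simp add: algebra_simps)
qed

lemma germ_sum_additive:
  assumes "fin_partition a b Q" "a < b"
    and add: "\<And>x y z. a \<le> x \<Longrightarrow> x < y \<Longrightarrow> y < z \<Longrightarrow> z \<le> b \<Longrightarrow> \<Xi> x z = \<Xi> x y + \<Xi> y z"
  shows "germ_sum \<Xi> b Q = \<Xi> a b"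
  using assms(1)
proof (induct "card Q" arbitrary: Q rule: less_induct)
  case less
  note Q = less.prems
  have fQ: "finite Q" and bQ: "b \<in> Q" and aQ: "a \<in> Q" using Q by (auto simp: fin_partition_def)
  show ?case
  proof (cases "Q = {a,b}")
    case True then show ?thesis using germ_sum_two_points[OF assms(2)] by simp
  next
    case False
    then obtain w where w: "w \<in> Q" "a < w" "w < b" using fin_partition_interior_point[OF Q assms(2)] by blast
    define u where "u = next_in Q a"
    have u: "u \<in> Q" "a < u" "u < b" using next_in_bounds[OF fQ w(1,2)] w unfolding u_def by auto
    define v where "v = next_in Q u"
    have v: "u < v" "v \<le> b" using next_in_bounds[OF fQ bQ u(3)] unfolding v_def by auto
    have P: "fin_partition a b (Q - {u})" using Q u unfolding fin_partition_def by auto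
    have c: "card (Q - {u}) < card Q" using fQ u by (meson card_Diff1_less)
    have "germ_sum \<Xi> b Q = germ_sum \<Xi> b (Q - {u}) + (\<Xi> a u + \<Xi> u v - \<Xi> a v)"
      using germ_sum_delete_point[OF Q aQ assms(2), of \<Xi>] u unfolding u_def v_def by simp
    also have "\<Xi> a v = \<Xi> a u + \<Xi> u v" using add[of a u v] u v by auto
    finally show ?thesis using less.hyps[OF c P] by simp
  qed
qed

lemma sum_next_in_minus:
  assumes "fin_partition a b Q" "a < b"
  shows "(\<Sum>x\<in>Q-{b}. next_in Q x - x) = b - a"
  using germ_sum_additive[OF assms, of "\<lambda>x y. y - x"] unfolding germ_sum_def by simp


lemma refinement_blocks:
  assumes P: "fin_partition a b P" and Q: "fin_partition a b Q" and PQ: "P \<subseteq> Q"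
  shows "Q - {b} = (\<Union>x\<in>P-{b}. Q \<inter> {x..<next_in P x})"
    and "disjoint_family_on (\<lambda>x. Q \<inter> {x..<next_in P x}) (P - {b})"
proof -
  have fP: "finite P" using P by (simp add: fin_partition_def)
  show "Q - {b} = (\<Union>x\<in>P-{b}. Q \<inter> {x..<next_in P x})"
  proof
    show "(\<Union>x\<in>P-{b}. Q \<inter> {x..<next_in P x}) \<subseteq> Q - {b}"
      using next_in_partition(3)[OF P] by fastforce
  next
    show "Q - {b} \<subseteq> (\<Union>x\<in>P-{b}. Q \<inter> {x..<next_in P x})"
    proof
      fix y assume y: "y \<in> Q - {b}"
      then have yb: "y < b" "a \<le> y" using Q by (auto simp: fin_partition_def)
      define S where "S = {z\<in>P. z \<le> y}"
      have fS: "finite S" "S \<noteq> {}" using fP P yb unfolding S_def fin_partition_def by auto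
      define x where "x = Max S"
      have xS: "x \<in> S" unfolding x_def using fS by (simp add: Max_in)
      have xP: "x \<in> P - {b}" using xS yb unfolding S_def by auto
      note nx = next_in_partition[OF P xP]
      have "y < next_in P x"
      proof (rule ccontr)
        assume "\<not> y < next_in P x"
        then have "next_in P x \<in> S" using nx unfolding S_def by auto
        then show False using nx fS unfolding x_def by (meson Max_ge not_le)
      qed
      then show "y \<in> (\<Union>x\<in>P-{b}. Q \<inter> {x..<next_in P x})" using xS xP y unfolding S_def by auto
    qed
  qed
  show "disjoint_family_on (\<lambda>x. Q \<inter> {x..<next_in P x}) (P - {b})"
    unfolding disjoint_family_on_def
  proof (intro ballI impI)
    have *: "Q \<inter> {u..<next_in P u} \<inter> (Q \<inter> {v..<next_in P v}) = {}"
      if "u \<in> P - {b}" "v \<in> P - {b}" "u < v" for u v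
      using next_in_bounds(3)[OF fP _ \<open>u < v\<close>] that by auto
    fix u v assume "u \<in> P - {b}" "v \<in> P - {b}" "u \<noteq> v"
    then show "Q \<inter> {u..<next_in P u} \<inter> (Q \<inter> {v..<next_in P v}) = {}"
      using *[of u v] *[of v u] by (cases "u < v") auto
  qed
qed

lemma germ_sum_refinement:
  assumes P: "fin_partition a b P" and Q: "fin_partition a b Q" and PQ: "P \<subseteq> Q"
  shows "germ_sum \<Xi> b Q = (\<Sum>x\<in>P-{b}. germ_sum \<Xi> (next_in P x) (Q \<inter> {x..next_in P x}))"
proof -
  have fQ: "finite Q" and fP: "finite P" using P Q by (auto simp: fin_partition_def)
  have block: "germ_sum \<Xi> (next_in P x) (Q \<inter> {x..next_in P x})
                 = (\<Sum>y\<in>Q \<inter> {x..<next_in P x}. \<Xi> y (next_in Q y))"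
    if x: "x \<in> P - {b}" for x
  proof -
    have nx: "next_in P x \<in> Q" "x < next_in P x" using next_in_partition[OF P x] PQ by auto
    have "next_in (Q \<inter> {x..next_in P x}) y = next_in Q y" if y: "y \<in> Q \<inter> {x..<next_in P x}" for y
    proof (rule next_in_eqI)
      have "y < next_in P x" using y by simp
      note ny = next_in_bounds[OF fQ nx(1) this]
      show "next_in Q y \<in> Q \<inter> {x..next_in P x}" "y < next_in Q y" using ny y by auto
      fix w assume "w \<in> Q \<inter> {x..next_in P x}" "y < w"
      then show "next_in Q y \<le> w" using next_in_bounds(3)[OF fQ] by simp
    qed (use fQ in simp)
    moreover have "Q \<inter> {x..next_in P x} - {next_in P x} = Q \<inter> {x..<next_in P x}" by auto
    ultimately show ?thesis unfolding germ_sum_def by (intro sum.cong) auto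
  qed
  have "germ_sum \<Xi> b Q = (\<Sum>y\<in>(\<Union>x\<in>P-{b}. Q \<inter> {x..<next_in P x}). \<Xi> y (next_in Q y))"
    unfolding germ_sum_def refinement_blocks(1)[OF P Q PQ] ..
  also have "\<dots> = (\<Sum>x\<in>P-{b}. \<Sum>y\<in>Q \<inter> {x..<next_in P x}. \<Xi> y (next_in Q y))"
    using refinement_blocks(2)[OF P Q PQ] fP fQ by (intro sum.UNION_disjoint_family) auto
  also have "\<dots> = (\<Sum>x\<in>P-{b}. germ_sum \<Xi> (next_in P x) (Q \<inter> {x..next_in P x}))"
    using block by (intro sum.cong) auto
  finally show ?thesis .
qed

lemma germ_sum_split:
  assumes Q: "fin_partition a b Q" and c: "c \<in> Q"
  shows "germ_sum \<Xi> b Q = germ_sum \<Xi> c (Q \<inter> {a..c}) + germ_sum \<Xi> b (Q \<inter> {c..b})"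
proof -
  have aQ: "a \<in> Q" and bQ: "b \<in> Q" and Qab: "Q \<subseteq> {a..b}" using Q by (auto simp: fin_partition_def)
  consider "c = a" | "c = b" | "a < c" "c < b" using c Qab by force
  then show ?thesis
  proof cases
    case 1
    then have "Q \<inter> {a..c} = {a}" "Q \<inter> {c..b} = Q" using aQ Qab by auto
    then show ?thesis using 1 by (simp add: germ_sum_def)
  next
    case 2
    then have "Q \<inter> {c..b} = {b}" "Q \<inter> {a..c} = Q" using bQ Qab by auto
    then show ?thesis using 2 by (simp add: germ_sum_def)
  next
    case 3
    have P: "fin_partition a b {a, c, b}" using 3 unfolding fin_partition_def by auto
    have "next_in {a, c, b} a = c" "next_in {a, c, b} c = b" using 3 by (auto intro!: next_in_eqI)
    moreover have "{a, c, b} - {b} = {a, c}" using 3 by auto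
    ultimately show ?thesis using germ_sum_refinement[OF P Q, of \<Xi>] aQ bQ c 3 by simp
  qed
qed

lemma fin_partition_union:
  assumes Q1: "fin_partition a c Q1" and Q2: "fin_partition c b Q2"
  shows "fin_partition a b (Q1 \<union> Q2)" "(Q1 \<union> Q2) \<inter> {a..c} = Q1" "(Q1 \<union> Q2) \<inter> {c..b} = Q2"
  using Q1 Q2 unfolding fin_partition_def by force+


lemma partition_of_nth:
  assumes p: "partition_of a b p"
  shows "p ! 0 = a" "p ! (length p - 1) = b" "0 < length p"
    and "\<And>i j. i < j \<Longrightarrow> j < length p \<Longrightarrow> p ! i < p ! j"
  using p sorted_wrt_nth_less
  by (auto simp: partition_of_def hd_conv_nth last_conv_nth)

lemma partition_of_set:
  assumes p: "partition_of a b p"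
  defines "n \<equiv> length p - 1"
  shows "set p - {b} = (\<lambda>i. p ! i) ` {..<n}" "inj_on (\<lambda>i. p ! i) {..<n}"
    and "\<And>i. i < n \<Longrightarrow> next_in (set p) (p ! i) = p ! Suc i"
    and "fin_partition a b (set p)"
proof -
  note nth = partition_of_nth[OF p]
  have len: "length p = Suc n" using nth(3) unfolding n_def by simp
  have pn: "p ! n = b" using nth(2) unfolding n_def .
  have mono: "p ! i \<le> p ! j" if "i \<le> j" "j \<le> n" for i j
    using nth(4)[of i j] that len by (cases "i = j") auto
  have sp: "set p = (\<lambda>i. p ! i) ` {..n}" using len by (auto simp: set_conv_nth less_Suc_eq_le)
  show "set p - {b} = (\<lambda>i. p ! i) ` {..<n}"
  proof -
    have "p ! i \<noteq> b" if "i < n" for i using pn nth(4)[of i n] that len by auto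
    then show ?thesis unfolding sp using pn
      by (auto simp: image_iff) (metis le_neq_implies_less lessThan_iff)
  qed
  show "inj_on (\<lambda>i. p ! i) {..<n}"
  proof (rule inj_onI, rule ccontr)
    fix i j assume ij: "i \<in> {..<n}" "j \<in> {..<n}" "p ! i = p ! j" "i \<noteq> j"
    then consider "i < j" | "j < i" by linarith
    then show False using nth(4)[of i j] nth(4)[of j i] ij len by cases auto
  qed
  show "next_in (set p) (p ! i) = p ! Suc i" if i: "i < n" for i
  proof (rule next_in_eqI)
    show "p ! Suc i \<in> set p" "p ! i < p ! Suc i" using i len nth(4) by auto
    fix w assume "w \<in> set p" "p ! i < w"
    then obtain j where j: "j \<le> n" "w = p ! j" using sp by auto
    have "i < j"
    proof (rule ccontr)
      assume "\<not> i < j"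
      then have "p ! j \<le> p ! i" using mono[of j i] i by simp
      then show False using j \<open>p ! i < w\<close> by simp
    qed
    then show "p ! Suc i \<le> w" using j mono by simp
  qed simp
  show "fin_partition a b (set p)"
    unfolding fin_partition_def sp using mono[of 0] mono[of _ n] nth(1) pn
    by (auto simp: image_iff)
qed

definition mesh_below :: "real set \<Rightarrow> real \<Rightarrow> real \<Rightarrow> bool" where
  "mesh_below Q b \<eta> \<longleftrightarrow> (\<forall>x\<in>Q-{b}. next_in Q x - x < \<eta>)"

lemma mesh_below_mono: "mesh_below Q b \<eta> \<Longrightarrow> \<eta> \<le> \<eta>' \<Longrightarrow> mesh_below Q b \<eta>'"
  unfolding mesh_below_def by force

lemma mesh_less_mono: "mesh_less p \<eta> \<Longrightarrow> \<eta> \<le> \<eta>' \<Longrightarrow> mesh_less p \<eta>'"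
  unfolding mesh_less_def by force

lemma mesh_less_imp_mesh_below:
  assumes "partition_of a b p" "mesh_less p \<eta>"
  shows "mesh_below (set p) b \<eta>"
  using assms(2) partition_of_set[OF assms(1)] unfolding mesh_less_def mesh_below_def by auto

lemma partition_of_fine_exists:
  assumes "a \<le> b" "0 < \<eta>"
  obtains p where "partition_of a b p" "mesh_less p \<eta>"
proof (cases "a = b")
  case True
  then show ?thesis using that[of "[a]"] by (simp add: partition_of_def mesh_less_def)
next
  case False
  obtain N :: nat where N: "(b - a) / \<eta> < real N" using reals_Archimedean2 by blast
  have Npos: "0 < real N" using N False assms by (smt (verit) divide_nonneg_pos)
  define f where "f i = a + (b - a) * real i / real N" for i :: nat
  have "b - a < \<eta> * real N" using N assms(2) by (simp add: divide_less_eq mult.commute)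
  then have "(b - a) / real N < \<eta>" using Npos by (simp add: divide_less_eq mult.commute)
  moreover have "f (Suc i) - f i = (b - a) / real N" for i unfolding f_def by (simp add: diff_divide_distrib[symmetric] algebra_simps)
  ultimately have step: "f (Suc i) - f i < \<eta>" for i by simp
  have "strict_mono f"
    using False assms Npos unfolding f_def by (intro strict_monoI) (simp add: divide_strict_right_mono)
  have "partition_of a b (map f [0..<Suc N])"
    unfolding partition_of_def
  proof (intro conjI)
    show "hd (map f [0..<Suc N]) = a" by (simp add: f_def upt_conv_Cons del: upt_Suc)
    show "last (map f [0..<Suc N]) = b" using Npos by (simp add: f_def)
    show "sorted_wrt (<) (map f [0..<Suc N])" unfolding sorted_wrt_map
      by (rule sorted_wrt_mono_rel[OF _ sorted_wrt_upt]) (use \<open>strict_mono f\<close> in \<open>auto dest: strict_monoD\<close>)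
  qed simp
  moreover have "mesh_less (map f [0..<Suc N]) \<eta>"
    using step unfolding mesh_less_def by (simp del: upt_Suc add: nth_map_upt)
  ultimately show ?thesis by (rule that)
qed

lemma fin_partition_fine_exists:
  assumes "a \<le> b" "0 < \<eta>"
  obtains Q where "fin_partition a b Q" "mesh_below Q b \<eta>"
proof -
  obtain p where "partition_of a b p" "mesh_less p \<eta>" using partition_of_fine_exists[OF assms] .
  then show ?thesis using that partition_of_set(4) mesh_less_imp_mesh_below by blast
qed


lemma mesh_below_union:
  assumes Q1: "fin_partition a c Q1" and Q2: "fin_partition c b Q2"
    and m1: "mesh_below Q1 c \<eta>" and m2: "mesh_below Q2 b \<eta>"
  shows "mesh_below (Q1 \<union> Q2) b \<eta>"
  unfolding mesh_below_def
proof
  have f: "finite Q1" "finite Q2" and Q1c: "Q1 \<subseteq> {a..c}" and Q2c: "Q2 \<subseteq> {c..b}" and cQ2: "c \<in> Q2"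
    using Q1 Q2 by (auto simp: fin_partition_def)
  have fQ: "finite (Q1 \<union> Q2)" using f by simp
  fix x assume x: "x \<in> Q1 \<union> Q2 - {b}"
  show "next_in (Q1 \<union> Q2) x - x < \<eta>"
  proof (cases "x < c")
    case True
    then have x1: "x \<in> Q1 - {c}" using x Q2c by auto
    note nx = next_in_partition[OF Q1 x1]
    have "next_in (Q1 \<union> Q2) x = next_in Q1 x"
    proof (rule next_in_eqI[OF fQ])
      show "next_in Q1 x \<in> Q1 \<union> Q2" "x < next_in Q1 x" using nx by auto
      fix w assume w: "w \<in> Q1 \<union> Q2" "x < w"
      then show "next_in Q1 x \<le> w"
        using next_in_bounds(3)[OF f(1) _ w(2)] nx Q2c by (cases "w \<in> Q1") auto
    qed
    then show ?thesis using m1 x1 unfolding mesh_below_def by auto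
  next
    case False
    then have x2: "x \<in> Q2 - {b}" using x Q1c cQ2 by auto
    note nx = next_in_partition[OF Q2 x2]
    have "next_in (Q1 \<union> Q2) x = next_in Q2 x"
    proof (rule next_in_eqI[OF fQ])
      show "next_in Q2 x \<in> Q1 \<union> Q2" "x < next_in Q2 x" using nx by auto
      fix w assume w: "w \<in> Q1 \<union> Q2" "x < w"
      then have "w \<in> Q2" using Q1c False by force
      then show "next_in Q2 x \<le> w" using next_in_bounds(3)[OF f(2) _ w(2)] by simp
    qed
    then show ?thesis using m2 x2 unfolding mesh_below_def by auto
  qed
qed

section \<open>The sewing lemma\<close>

lemma card_inner_points:
  assumes Q: "fin_partition a b Q"
  shows "card Q - 2 \<le> card {x\<in>Q-{b}. next_in Q x < b}"
proof -
  define D where "D = {x\<in>Q-{b}. next_in Q x < b}"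
  define E where "E = {x\<in>Q-{b}. next_in Q x = b}"
  have fQ: "finite Q" and bQ: "b \<in> Q" using Q by (auto simp: fin_partition_def)
  have split: "Q - {b} = D \<union> E" "D \<inter> E = {}"
    using next_in_partition(3)[OF Q] unfolding D_def E_def by force+
  have "inj_on (next_in Q) E" using inj_on_next_in[OF Q] by (rule inj_on_subset) (auto simp: E_def)
  then have "card E = card (next_in Q ` E)" by (rule card_image[symmetric])
  also have "\<dots> \<le> card {b}" by (intro card_mono) (auto simp: E_def)
  finally have "card E \<le> 1" by simp
  moreover have "card (Q - {b}) = card D + card E"
    unfolding split(1) by (rule card_Un_disjoint) (use fQ split(2) in \<open>auto simp: D_def E_def\<close>)
  moreover have "card (Q - {b}) = card Q - 1" using fQ bQ by simp
  ultimately show ?thesis unfolding D_def by linarith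
qed

lemma sum_double_steps_le:
  assumes Q: "fin_partition a b Q" and ab: "a < b"
  shows "(\<Sum>x\<in>{x\<in>Q-{b}. next_in Q x < b}. next_in Q (next_in Q x) - x) \<le> 2 * (b - a)"
proof -
  let ?n = "next_in Q" and ?D = "{x\<in>Q-{b}. next_in Q x < b}"
  have fQ: "finite Q" using Q by (simp add: fin_partition_def)
  note step = next_in_partition[OF Q]
  have tel: "(\<Sum>x\<in>Q-{b}. ?n x - x) = b - a" by (rule sum_next_in_minus[OF Q ab])
  have "(\<Sum>x\<in>?D. ?n x - x) \<le> b - a"
    unfolding tel[symmetric] by (rule sum_mono2) (use fQ step in \<open>auto simp: less_imp_le\<close>)
  moreover have "(\<Sum>x\<in>?D. ?n (?n x) - ?n x) \<le> b - a"
  proof -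
    have inj: "inj_on ?n ?D" using inj_on_next_in[OF Q] by (rule inj_on_subset) auto
    have "(\<Sum>x\<in>?D. ?n (?n x) - ?n x) = (\<Sum>y\<in>?n ` ?D. ?n y - y)"
      unfolding sum.reindex[OF inj] o_def ..
    also have "\<dots> \<le> b - a"
      unfolding tel[symmetric] by (rule sum_mono2) (use fQ step in \<open>auto simp: less_imp_le\<close>)
    finally show ?thesis .
  qed
  ultimately have "(\<Sum>x\<in>?D. ?n x - x) + (\<Sum>x\<in>?D. ?n (?n x) - ?n x) \<le> (b - a) + (b - a)"
    by (rule add_mono)
  then show ?thesis by (simp add: sum.distrib[symmetric])
qed

text \<open>By averaging: the double steps starting at the at least k - 2 inner points have total length
  at most 2(b - a).\<close>

lemma exists_short_double_step:
  assumes Q: "fin_partition a b Q" and ab: "a < b" and k: "3 \<le> card Q"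
  obtains x where "x \<in> Q" "x < b" "next_in Q x < b"
    "next_in Q (next_in Q x) - x \<le> (b - a) * (2 / real (card Q - 2))"
proof -
  let ?n = "next_in Q" and ?D = "{x\<in>Q-{b}. next_in Q x < b}"
  define gap where "gap x = ?n (?n x) - x" for x
  have fQ: "finite Q" using Q by (simp add: fin_partition_def)
  have cD: "real (card Q - 2) \<le> real (card ?D)" using card_inner_points[OF Q] by simp
  have fD: "finite ?D" using fQ by simp
  have "card ?D \<noteq> 0" using card_inner_points[OF Q] k by linarith
  then have "?D \<noteq> {}" using card_gt_0_iff by blast
  then have "arg_min_on gap ?D \<in> ?D" "\<And>y. y \<in> ?D \<Longrightarrow> gap (arg_min_on gap ?D) \<le> gap y"
    using arg_min_if_finite[OF fD, of gap] by (auto simp: not_less)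
  then obtain x where xD: "x \<in> ?D" and xmin: "\<And>y. y \<in> ?D \<Longrightarrow> gap x \<le> gap y"
    by blast
  then have x: "x \<in> Q - {b}" and nx: "?n x \<in> Q - {b}" using next_in_partition(1)[OF Q] by auto
  have gap_pos: "0 \<le> gap x"
    using next_in_partition(2)[OF Q x] next_in_partition(2)[OF Q nx] unfolding gap_def by simp
  have "real (card Q - 2) * gap x \<le> real (card ?D) * gap x" using cD gap_pos by (rule mult_right_mono)
  also have "\<dots> \<le> (\<Sum>y\<in>?D. gap y)" by (rule sum_bounded_below) (use xmin in auto)
  also have "\<dots> \<le> 2 * (b - a)" using sum_double_steps_le[OF Q ab] unfolding gap_def .
  finally have "gap x \<le> (b - a) * (2 / real (card Q - 2))" using k by (simp add: field_simps)
  moreover have "x < b" using x Q by (auto simp: fin_partition_def)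
  ultimately show ?thesis using that x xD unfolding gap_def by blast
qed

lemma exists_cheap_deletion:
  fixes \<Xi> :: "real \<Rightarrow> real \<Rightarrow> 'a::real_normed_vector"
  assumes Q: "fin_partition s t Q" and st: "s < t" and K: "0 \<le> K" and th: "0 \<le> \<theta>"
    and defect: "\<And>x y z. s \<le> x \<Longrightarrow> x \<le> y \<Longrightarrow> y \<le> z \<Longrightarrow> z \<le> t \<Longrightarrow>
                norm (\<Xi> x z - \<Xi> x y - \<Xi> y z) \<le> K * (z - x) powr \<theta>"
    and k: "3 \<le> card Q"
  obtains u where "u \<in> Q" "s < u" "u < t"
    "norm (germ_sum \<Xi> t Q - germ_sum \<Xi> t (Q - {u})) \<le> K * (t - s) powr \<theta> * (2 / real (card Q - 2)) powr \<theta>"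
proof -
  have fQ: "finite Q" and tQ: "t \<in> Q" and Qst: "Q \<subseteq> {s..t}" using Q by (auto simp: fin_partition_def)
  obtain x where x: "x \<in> Q" "x < t" "next_in Q x < t"
    and gap: "next_in Q (next_in Q x) - x \<le> (t - s) * (2 / real (card Q - 2))"
    using exists_short_double_step[OF Q st k] by blast
  define u where "u = next_in Q x"
  define v where "v = next_in Q u"
  have u: "u \<in> Q" "x < u" "u < t" using next_in_bounds[OF fQ tQ x(2)] x(3) unfolding u_def by auto
  have v: "u < v" "v \<le> t" using next_in_bounds[OF fQ tQ u(3)] unfolding v_def by auto
  have "germ_sum \<Xi> t Q - germ_sum \<Xi> t (Q - {u}) = - (\<Xi> x v - \<Xi> x u - \<Xi> u v)"
    using germ_sum_delete_point[OF Q x, of \<Xi>] unfolding u_def[symmetric] v_def[symmetric]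
    by (simp add: algebra_simps)
  then have "norm (germ_sum \<Xi> t Q - germ_sum \<Xi> t (Q - {u})) = norm (\<Xi> x v - \<Xi> x u - \<Xi> u v)"
    by (metis norm_minus_cancel)
  also have "\<dots> \<le> K * (v - x) powr \<theta>" using defect[of x u v] Qst x u v by auto
  also have "\<dots> \<le> K * ((t - s) * (2 / real (card Q - 2))) powr \<theta>"
    using gap u v th K unfolding u_def[symmetric] v_def[symmetric]
    by (intro mult_left_mono powr_mono2) auto
  also have "\<dots> = K * (t - s) powr \<theta> * (2 / real (card Q - 2)) powr \<theta>"
    using st k by (subst powr_mult) auto
  finally show ?thesis using that u x Qst by force
qed

text \<open>Deleting points one at a time as above, the k-th deletion costs at most
  K (t - s) powr \<theta> (2 / k) powr \<theta>, a series that converges for \<theta> > 1.\<close>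

lemma sewing_bound:
  fixes \<Xi> :: "real \<Rightarrow> real \<Rightarrow> 'a::real_normed_vector"
  assumes Q: "fin_partition s t Q" and st: "s < t" and K: "0 \<le> K" and th: "0 \<le> \<theta>"
    and defect: "\<And>x y z. s \<le> x \<Longrightarrow> x \<le> y \<Longrightarrow> y \<le> z \<Longrightarrow> z \<le> t \<Longrightarrow>
                norm (\<Xi> x z - \<Xi> x y - \<Xi> y z) \<le> K * (z - x) powr \<theta>"
  shows "norm (germ_sum \<Xi> t Q - \<Xi> s t)
           \<le> K * (t - s) powr \<theta> * (\<Sum>j\<in>{1..<card Q - 1}. (2 / real j) powr \<theta>)"
  using Q
proof (induct "card Q" arbitrary: Q rule: less_induct)
  case less
  note Q = less.prems
  have fQ: "finite Q" and sQ: "s \<in> Q" and tQ: "t \<in> Q" using Q by (auto simp: fin_partition_def)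
  show ?case
  proof (cases "Q = {s,t}")
    case True
    have "0 \<le> (\<Sum>j\<in>{1..<card Q - 1}. (2 / real j) powr \<theta>)" by (intro sum_nonneg) auto
    then show ?thesis using True germ_sum_two_points[OF st, of \<Xi>] K by simp
  next
    case False
    define k where "k = card Q"
    obtain w where "w \<in> Q" "s < w" "w < t" using fin_partition_interior_point[OF Q st False] by blast
    then have "card {s,w,t} \<le> k" using sQ tQ fQ unfolding k_def by (intro card_mono) auto
    then have k3: "3 \<le> k" using \<open>s < w\<close> \<open>w < t\<close> by simp
    obtain u where u: "u \<in> Q" "s < u" "u < t"
      and cheap: "norm (germ_sum \<Xi> t Q - germ_sum \<Xi> t (Q - {u})) \<le> K * (t - s) powr \<theta> * (2 / real (k - 2)) powr \<theta>"
      using exists_cheap_deletion[OF Q st K th defect] k3 unfolding k_def by blast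
    have P: "fin_partition s t (Q - {u})" using Q u unfolding fin_partition_def by auto
    have "card (Q - {u}) = k - 1" using fQ u unfolding k_def by simp
    then have IH: "norm (germ_sum \<Xi> t (Q - {u}) - \<Xi> s t)
                \<le> K * (t - s) powr \<theta> * (\<Sum>j\<in>{1..<k - 2}. (2 / real j) powr \<theta>)"
      using less.hyps[OF _ P] k3 unfolding k_def by (simp add: numeral_2_eq_2)
    have "k - 1 = Suc (k - 2)" using k3 by simp
    then have series: "(\<Sum>j\<in>{1..<k - 1}. (2 / real j) powr \<theta>)
        = (\<Sum>j\<in>{1..<k - 2}. (2 / real j) powr \<theta>) + (2 / real (k - 2)) powr \<theta>"
      using k3 by (simp add: sum.atLeastLessThan_Suc)
    have "norm (germ_sum \<Xi> t Q - \<Xi> s t)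
        \<le> norm (germ_sum \<Xi> t (Q - {u}) - \<Xi> s t) + norm (germ_sum \<Xi> t Q - germ_sum \<Xi> t (Q - {u}))"
      using norm_triangle_ineq[of "germ_sum \<Xi> t (Q - {u}) - \<Xi> s t" "germ_sum \<Xi> t Q - germ_sum \<Xi> t (Q - {u})"]
      by simp
    also have "\<dots> \<le> K * (t - s) powr \<theta> * (\<Sum>j\<in>{1..<k - 1}. (2 / real j) powr \<theta>)"
      using add_mono[OF IH cheap] unfolding series by (simp add: distrib_left)
    finally show ?thesis unfolding k_def .
  qed
qed


section \<open>The Young germ\<close>

definition sewing_const :: "real \<Rightarrow> real" where
  "sewing_const \<theta> = 2 powr \<theta> * (\<Sum>n. real n powr (-\<theta>))"

lemma sewing_const_nonneg: "1 < \<theta> \<Longrightarrow> 0 \<le> sewing_const \<theta>"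
  unfolding sewing_const_def
  by (intro mult_nonneg_nonneg suminf_nonneg) (auto simp: summable_real_powr_iff)

lemma sum_le_sewing_const:
  assumes "1 < \<theta>"
  shows "(\<Sum>j\<in>{1..<m}. (2 / real j) powr \<theta>) \<le> sewing_const \<theta>"
proof -
  have sm: "summable (\<lambda>n. real n powr (-\<theta>))" using assms by (simp add: summable_real_powr_iff)
  have "(\<Sum>j\<in>{1..<m}. (2 / real j) powr \<theta>) = 2 powr \<theta> * (\<Sum>j\<in>{1..<m}. real j powr (-\<theta>))"
    by (simp add: sum_distrib_left powr_divide powr_minus_divide)
  also have "\<dots> \<le> sewing_const \<theta>"
    unfolding sewing_const_def by (intro mult_left_mono sum_le_suminf sm) auto
  finally show ?thesis .
qed

definition holder_bound :: "real \<Rightarrow> real \<Rightarrow> real \<Rightarrow> real \<Rightarrow> (real \<Rightarrow> 'a::real_normed_vector) \<Rightarrow> bool" where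
  "holder_bound K e a b f \<longleftrightarrow> 0 \<le> K \<and> (\<forall>s\<in>{a..b}. \<forall>t\<in>{a..b}. norm (f t - f s) \<le> K * \<bar>t - s\<bar> powr e)"

lemma holder_bound_subinterval: "holder_bound K e a b f \<Longrightarrow> a \<le> c \<Longrightarrow> d \<le> b \<Longrightarrow> holder_bound K e c d f"
  unfolding holder_bound_def by auto

lemma holder_on_imp_holder_bound:
  assumes "holder_on e T f"
  obtains K where "holder_bound K e 0 T f"
proof -
  obtain C where C: "\<forall>s\<in>{0..T}. \<forall>t\<in>{0..T}. norm (f t - f s) \<le> C * \<bar>t - s\<bar> powr e"
    using assms unfolding holder_on_def by blast
  have "holder_bound (max C 0) e 0 T f" unfolding holder_bound_def
  proof (intro conjI ballI)
    fix s t assume "s \<in> {0..T}" "t \<in> {0..T}"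
    then have "norm (f t - f s) \<le> C * \<bar>t - s\<bar> powr e" using C by blast
    also have "\<dots> \<le> max C 0 * \<bar>t - s\<bar> powr e" by (intro mult_right_mono) auto
    finally show "norm (f t - f s) \<le> max C 0 * \<bar>t - s\<bar> powr e" .
  qed simp
  then show ?thesis by (rule that)
qed

definition young_germ ::
  "(real \<Rightarrow> ('v::real_normed_vector \<Rightarrow>\<^sub>L 'u::real_normed_vector)) \<Rightarrow> (real \<Rightarrow> 'v) \<Rightarrow> real \<Rightarrow> real \<Rightarrow> 'u" where
  "young_germ W X s t = W s (X t - X s)"

lemma young_germ_defect:
  assumes W: "holder_bound Kw \<gamma> a b W" and X: "holder_bound Kx \<alpha> a b X" and pos: "0 < \<alpha>" "0 < \<gamma>"
    and xyz: "a \<le> x" "x \<le> y" "y \<le> z" "z \<le> b"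
  shows "norm (young_germ W X x z - young_germ W X x y - young_germ W X y z)
           \<le> Kw * Kx * (z - x) powr (\<alpha> + \<gamma>)"
proof -
  have Kn: "0 \<le> Kw" "0 \<le> Kx" using W X by (auto simp: holder_bound_def)
  have "young_germ W X x z - young_germ W X x y - young_germ W X y z = (W x - W y) (X z - X y)"
    unfolding young_germ_def by (simp add: blinfun.diff_left blinfun.diff_right algebra_simps)
  then have "norm (young_germ W X x z - young_germ W X x y - young_germ W X y z)
               \<le> norm (W x - W y) * norm (X z - X y)"
    by (metis norm_blinfun)
  also have "\<dots> \<le> (Kw * (z - x) powr \<gamma>) * (Kx * (z - x) powr \<alpha>)"
  proof (intro mult_mono)
    have "x \<in> {a..b}" "y \<in> {a..b}" "z \<in> {a..b}" using xyz by auto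
    then have "norm (W x - W y) \<le> Kw * \<bar>x - y\<bar> powr \<gamma>" "norm (X z - X y) \<le> Kx * \<bar>z - y\<bar> powr \<alpha>"
      using W X unfolding holder_bound_def by blast+
    moreover have "\<bar>x - y\<bar> powr \<gamma> \<le> (z - x) powr \<gamma>" "\<bar>z - y\<bar> powr \<alpha> \<le> (z - x) powr \<alpha>"
      using xyz pos by (auto intro!: powr_mono2)
    ultimately show "norm (W x - W y) \<le> Kw * (z - x) powr \<gamma>" "norm (X z - X y) \<le> Kx * (z - x) powr \<alpha>"
      using Kn by (meson mult_left_mono order_trans)+
  qed (use Kn in auto)
  also have "\<dots> = Kw * Kx * (z - x) powr (\<alpha> + \<gamma>)" by (simp add: powr_add)
  finally show ?thesis .
qed

lemma young_germ_sum_bound: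
  assumes W: "holder_bound Kw \<gamma> a b W" and X: "holder_bound Kx \<alpha> a b X"
    and pos: "0 < \<alpha>" "0 < \<gamma>" "1 < \<alpha> + \<gamma>" and Q: "fin_partition a b Q"
  shows "norm (germ_sum (young_germ W X) b Q - young_germ W X a b)
           \<le> sewing_const (\<alpha> + \<gamma>) * Kw * Kx * (b - a) powr (\<alpha> + \<gamma>)"
proof (cases "a < b")
  case True
  have Kn: "0 \<le> Kw" "0 \<le> Kx" using W X by (auto simp: holder_bound_def)
  have "norm (germ_sum (young_germ W X) b Q - young_germ W X a b)
      \<le> Kw * Kx * (b - a) powr (\<alpha> + \<gamma>) * (\<Sum>j\<in>{1..<card Q - 1}. (2 / real j) powr (\<alpha> + \<gamma>))"
    by (rule sewing_bound[OF Q True]) (use Kn pos young_germ_defect[OF W X pos(1,2)] in auto)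
  also have "\<dots> \<le> Kw * Kx * (b - a) powr (\<alpha> + \<gamma>) * sewing_const (\<alpha> + \<gamma>)"
    using sum_le_sewing_const[OF pos(3)] Kn by (intro mult_left_mono) auto
  finally show ?thesis by (simp add: algebra_simps)
next
  case False
  then have "a = b" using fin_partition_le[OF Q] by simp
  then have "Q = {b}" using fin_partition_singleton Q by blast
  then show ?thesis using \<open>a = b\<close> by (simp add: germ_sum_def young_germ_def)
qed

section \<open>Limits as the mesh tends to zero\<close>

text \<open>fine_part P \<eta> stands for "P is a partition of mesh below \<eta>"; it covers both the list
  partitions of has_young_integral and the set partitions used here.\<close>

lemma fine_limit_unique:
  fixes S :: "'p \<Rightarrow> 'a::real_normed_vector" and fine_part :: "'p \<Rightarrow> real \<Rightarrow> bool"
  assumes fine_exists: "\<And>\<eta>. 0 < \<eta> \<Longrightarrow> \<exists>P. fine_part P \<eta>"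
    and fine_mono: "\<And>P \<eta> \<eta>'. fine_part P \<eta> \<Longrightarrow> \<eta> \<le> \<eta>' \<Longrightarrow> fine_part P \<eta>'"
    and I: "\<forall>\<epsilon>>0. \<exists>\<eta>>0. \<forall>P. fine_part P \<eta> \<longrightarrow> norm (S P - I) < \<epsilon>"
    and J: "\<forall>\<epsilon>>0. \<exists>\<eta>>0. \<forall>P. fine_part P \<eta> \<longrightarrow> norm (S P - J) < \<epsilon>"
  shows "I = J"
proof (rule ccontr)
  assume "I \<noteq> J"
  then have e: "0 < norm (I - J) / 2" by simp
  obtain \<eta>1 where \<eta>1: "0 < \<eta>1" "\<forall>P. fine_part P \<eta>1 \<longrightarrow> norm (S P - I) < norm (I - J) / 2"
    using I e by blast
  obtain \<eta>2 where \<eta>2: "0 < \<eta>2" "\<forall>P. fine_part P \<eta>2 \<longrightarrow> norm (S P - J) < norm (I - J) / 2"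
    using J e by blast
  have "0 < min \<eta>1 \<eta>2" using \<eta>1 \<eta>2 by simp
  then obtain P where P: "fine_part P (min \<eta>1 \<eta>2)" using fine_exists by blast
  have "norm (S P - I) < norm (I - J) / 2" "norm (S P - J) < norm (I - J) / 2"
    using \<eta>1 \<eta>2 fine_mono[OF P] by auto
  moreover have "norm (I - J) \<le> norm (S P - J) + norm (S P - I)"
    using norm_triangle_ineq4[of "S P - J" "S P - I"] by simp
  ultimately show False by linarith
qed

lemma fine_limit_exists:
  fixes S :: "'p \<Rightarrow> 'a::banach" and fine_part :: "'p \<Rightarrow> real \<Rightarrow> bool"
  assumes fine_exists: "\<And>\<eta>. 0 < \<eta> \<Longrightarrow> \<exists>P. fine_part P \<eta>"
    and fine_mono: "\<And>P \<eta> \<eta>'. fine_part P \<eta> \<Longrightarrow> \<eta> \<le> \<eta>' \<Longrightarrow> fine_part P \<eta>'"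
    and Cauchy: "\<And>\<epsilon>. 0 < \<epsilon> \<Longrightarrow> \<exists>\<eta>>0. \<forall>P Q. fine_part P \<eta> \<longrightarrow> fine_part Q \<eta> \<longrightarrow> norm (S P - S Q) < \<epsilon>"
  shows "\<exists>I. \<forall>\<epsilon>>0. \<exists>\<eta>>0. \<forall>P. fine_part P \<eta> \<longrightarrow> norm (S P - I) < \<epsilon>"
proof -
  have "\<forall>n. \<exists>P. fine_part P (1 / real (Suc n))" using fine_exists by simp
  then obtain Ps where Ps: "\<And>n. fine_part (Ps n) (1 / real (Suc n))" by metis
  have eventually_fine: "\<exists>N. \<forall>n\<ge>N. fine_part (Ps n) \<eta>" if "0 < \<eta>" for \<eta> :: real
  proof -
    obtain N :: nat where N: "1 / \<eta> < N" using reals_Archimedean2 by blast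
    have "1 / real (Suc n) \<le> \<eta>" if "N \<le> n" for n
    proof -
      have "1 / \<eta> < real (Suc n)" using N that by linarith
      then have "1 < \<eta> * real (Suc n)" using \<open>0 < \<eta>\<close> by (simp add: divide_less_eq mult.commute)
      then show ?thesis by (simp add: divide_le_eq mult.commute)
    qed
    then show ?thesis using Ps fine_mono by blast
  qed
  have "Cauchy (\<lambda>n. S (Ps n))"
  proof (rule metric_CauchyI)
    fix \<epsilon> :: real assume "0 < \<epsilon>"
    then obtain \<eta> where \<eta>: "0 < \<eta>" "\<forall>P Q. fine_part P \<eta> \<longrightarrow> fine_part Q \<eta> \<longrightarrow> norm (S P - S Q) < \<epsilon>"
      using Cauchy by blast
    then obtain N where "\<forall>n\<ge>N. fine_part (Ps n) \<eta>" using eventually_fine by blast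
    then have "\<forall>m\<ge>N. \<forall>n\<ge>N. dist (S (Ps m)) (S (Ps n)) < \<epsilon>"
      using \<eta>(2) by (simp add: dist_norm)
    then show "\<exists>M. \<forall>m\<ge>M. \<forall>n\<ge>M. dist (S (Ps m)) (S (Ps n)) < \<epsilon>" by blast
  qed
  then obtain I where lim: "(\<lambda>n. S (Ps n)) \<longlonglongrightarrow> I" using Cauchy_convergent_iff convergent_def by blast
  have "\<exists>\<eta>>0. \<forall>P. fine_part P \<eta> \<longrightarrow> norm (S P - I) < \<epsilon>" if "0 < \<epsilon>" for \<epsilon>
  proof -
    obtain \<eta> where \<eta>: "0 < \<eta>" "\<forall>P Q. fine_part P \<eta> \<longrightarrow> fine_part Q \<eta> \<longrightarrow> norm (S P - S Q) < \<epsilon> / 2"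
      using Cauchy[of "\<epsilon> / 2"] \<open>0 < \<epsilon>\<close> by auto
    obtain N1 where N1: "\<forall>n\<ge>N1. fine_part (Ps n) \<eta>" using eventually_fine \<eta>(1) by blast
    obtain N2 where N2: "\<forall>n\<ge>N2. norm (S (Ps n) - I) < \<epsilon> / 2"
      using lim \<open>0 < \<epsilon>\<close> unfolding lim_sequentially dist_norm by (meson half_gt_zero)
    define n where "n = max N1 N2"
    have "norm (S P - I) < \<epsilon>" if "fine_part P \<eta>" for P
    proof -
      have "norm (S P - S (Ps n)) < \<epsilon> / 2" using \<eta>(2) N1 that unfolding n_def by simp
      moreover have "norm (S (Ps n) - I) < \<epsilon> / 2" using N2 unfolding n_def by simp
      ultimately show ?thesis using norm_triangle_lt[of "S P - S (Ps n)" "S (Ps n) - I" \<epsilon>] by simp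
    qed
    then show ?thesis using \<eta>(1) by blast
  qed
  then show ?thesis by blast
qed

definition has_germ_integral :: "(real \<Rightarrow> real \<Rightarrow> 'a::real_normed_vector) \<Rightarrow> real \<Rightarrow> real \<Rightarrow> 'a \<Rightarrow> bool" where
  "has_germ_integral \<Xi> a b I \<longleftrightarrow>
     (\<forall>\<epsilon>>0. \<exists>\<eta>>0. \<forall>Q. fin_partition a b Q \<and> mesh_below Q b \<eta> \<longrightarrow> norm (germ_sum \<Xi> b Q - I) < \<epsilon>)"

lemma has_germ_integral_unique:
  assumes "a \<le> b" "has_germ_integral \<Xi> a b I" "has_germ_integral \<Xi> a b J"
  shows "I = J"
proof (rule fine_limit_unique[where fine_part = "\<lambda>Q \<eta>. fin_partition a b Q \<and> mesh_below Q b \<eta>"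
      and S = "germ_sum \<Xi> b"])
  show "\<exists>Q. fin_partition a b Q \<and> mesh_below Q b \<eta>" if "0 < \<eta>" for \<eta>
    using fin_partition_fine_exists[OF assms(1) that] by blast
qed (use assms mesh_below_mono in \<open>auto simp: has_germ_integral_def\<close>)

lemma has_young_integral_unique:
  assumes "a \<le> b" "has_young_integral W X a b I" "has_young_integral W X a b J"
  shows "I = J"
proof (rule fine_limit_unique[where fine_part = "\<lambda>p \<eta>. partition_of a b p \<and> mesh_less p \<eta>"
      and S = "riemann_sum W X"])
  show "\<exists>p. partition_of a b p \<and> mesh_less p \<eta>" if "0 < \<eta>" for \<eta>
    using partition_of_fine_exists[OF assms(1) that] by blast
qed (use assms mesh_less_mono in \<open>auto simp: has_young_integral_def\<close>)

lemma riemann_sum_eq_germ_sum: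
  assumes "partition_of a b p"
  shows "riemann_sum W X p = germ_sum (young_germ W X) b (set p)"
proof -
  note S = partition_of_set[OF assms]
  have "germ_sum (young_germ W X) b (set p)
      = (\<Sum>i<length p - 1. young_germ W X (p ! i) (next_in (set p) (p ! i)))"
    unfolding germ_sum_def S(1) sum.reindex[OF S(2)] by (simp add: o_def)
  also have "\<dots> = riemann_sum W X p"
    unfolding riemann_sum_def young_germ_def using S(3) by (intro sum.cong) auto
  finally show ?thesis ..
qed

lemma has_germ_integral_imp_has_young_integral:
  assumes "has_germ_integral (young_germ W X) a b I"
  shows "has_young_integral W X a b I"
  using assms partition_of_set(4) mesh_less_imp_mesh_below riemann_sum_eq_germ_sum
  unfolding has_germ_integral_def has_young_integral_def by metis

lemma has_germ_integral_cong:
  assumes "\<And>x. x \<in> {a..b} \<Longrightarrow> \<Xi> x = \<Xi>' x"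
  shows "has_germ_integral \<Xi> a b = has_germ_integral \<Xi>' a b"
proof -
  have "germ_sum \<Xi> b Q = germ_sum \<Xi>' b Q" if "fin_partition a b Q" for Q
    unfolding germ_sum_def using that assms by (intro sum.cong) (auto simp: fin_partition_def)
  then show ?thesis unfolding has_germ_integral_def by (intro ext) auto
qed


lemma has_germ_integral_additive:
  assumes "a \<le> c" "c \<le> b"
    and I1: "has_germ_integral \<Xi> a c I1" and I2: "has_germ_integral \<Xi> c b I2"
    and J: "has_germ_integral \<Xi> a b J"
  shows "J = I1 + I2"
proof (rule ccontr)
  assume "J \<noteq> I1 + I2"
  define e where "e = norm (J - (I1 + I2)) / 3"
  have e: "0 < e" using \<open>J \<noteq> I1 + I2\<close> unfolding e_def by simp
  obtain \<eta>1 where h1: "0 < \<eta>1" "\<forall>Q. fin_partition a c Q \<and> mesh_below Q c \<eta>1 \<longrightarrow> norm (germ_sum \<Xi> c Q - I1) < e"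
    using I1 e unfolding has_germ_integral_def by blast
  obtain \<eta>2 where h2: "0 < \<eta>2" "\<forall>Q. fin_partition c b Q \<and> mesh_below Q b \<eta>2 \<longrightarrow> norm (germ_sum \<Xi> b Q - I2) < e"
    using I2 e unfolding has_germ_integral_def by blast
  obtain \<eta>3 where h3: "0 < \<eta>3" "\<forall>Q. fin_partition a b Q \<and> mesh_below Q b \<eta>3 \<longrightarrow> norm (germ_sum \<Xi> b Q - J) < e"
    using J e unfolding has_germ_integral_def by blast
  define \<eta> where "\<eta> = min \<eta>1 (min \<eta>2 \<eta>3)"
  have \<eta>: "0 < \<eta>" using h1 h2 h3 unfolding \<eta>_def by simp
  obtain Q1 where Q1: "fin_partition a c Q1" "mesh_below Q1 c \<eta>" using fin_partition_fine_exists[OF assms(1) \<eta>] .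
  obtain Q2 where Q2: "fin_partition c b Q2" "mesh_below Q2 b \<eta>" using fin_partition_fine_exists[OF assms(2) \<eta>] .
  note U = fin_partition_union[OF Q1(1) Q2(1)]
  have "mesh_below Q1 c \<eta>1" "mesh_below Q2 b \<eta>2" "mesh_below (Q1 \<union> Q2) b \<eta>3"
    using mesh_below_union[OF Q1(1) Q2(1) Q1(2) Q2(2)] Q1(2) Q2(2)
    by (auto elim!: mesh_below_mono simp: \<eta>_def)
  then have r1: "norm (germ_sum \<Xi> c Q1 - I1) < e" and r2: "norm (germ_sum \<Xi> b Q2 - I2) < e"
    and r3: "norm (germ_sum \<Xi> b (Q1 \<union> Q2) - J) < e"
    using h1(2) h2(2) h3(2) Q1(1) Q2(1) U(1) by blast+
  have "c \<in> Q1 \<union> Q2" using Q1 by (simp add: fin_partition_def)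
  then have "germ_sum \<Xi> b (Q1 \<union> Q2) = germ_sum \<Xi> c Q1 + germ_sum \<Xi> b Q2"
    using germ_sum_split[OF U(1), of c \<Xi>] unfolding U(2,3) by blast
  then have "J - (I1 + I2) = (germ_sum \<Xi> c Q1 - I1) + (germ_sum \<Xi> b Q2 - I2) - (germ_sum \<Xi> b (Q1 \<union> Q2) - J)"
    by (simp add: algebra_simps)
  also have "norm \<dots> \<le> norm ((germ_sum \<Xi> c Q1 - I1) + (germ_sum \<Xi> b Q2 - I2)) + norm (germ_sum \<Xi> b (Q1 \<union> Q2) - J)"
    by (rule norm_triangle_ineq4)
  also have "\<dots> \<le> norm (germ_sum \<Xi> c Q1 - I1) + norm (germ_sum \<Xi> b Q2 - I2) + norm (germ_sum \<Xi> b (Q1 \<union> Q2) - J)"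
    using norm_triangle_ineq by simp
  finally have "norm (J - (I1 + I2)) < 3 * e" using r1 r2 r3 by simp
  then show False unfolding e_def by simp
qed

section \<open>The Young integral\<close>

lemma young_germ_refinement_bound:
  assumes W: "holder_bound Kw \<gamma> a b W" and X: "holder_bound Kx \<alpha> a b X"
    and pos: "0 < \<alpha>" "0 < \<gamma>" "1 < \<alpha> + \<gamma>"
    and P: "fin_partition a b P" and R: "fin_partition a b R" and PR: "P \<subseteq> R"
    and mesh: "mesh_below P b \<eta>" and ab: "a < b"
  shows "norm (germ_sum (young_germ W X) b R - germ_sum (young_germ W X) b P)
           \<le> sewing_const (\<alpha> + \<gamma>) * Kw * Kx * \<eta> powr (\<alpha> + \<gamma> - 1) * (b - a)"
proof -
  let ?\<Xi> = "young_germ W X" and ?\<theta> = "\<alpha> + \<gamma>"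
  define B where "B = sewing_const ?\<theta> * Kw * Kx"
  have "0 \<le> B" using sewing_const_nonneg[OF pos(3)] W X unfolding B_def holder_bound_def by simp
  have block: "norm (germ_sum ?\<Xi> (next_in P x) (R \<inter> {x..next_in P x}) - ?\<Xi> x (next_in P x))
                 \<le> B * \<eta> powr (?\<theta> - 1) * (next_in P x - x)"
    if x: "x \<in> P - {b}" for x
  proof -
    note nx = next_in_partition[OF P x]
    have "a \<le> x" using x P by (auto simp: fin_partition_def)
    have "fin_partition x (next_in P x) (R \<inter> {x..next_in P x})"
      using R PR x nx unfolding fin_partition_def by auto
    then have "norm (germ_sum ?\<Xi> (next_in P x) (R \<inter> {x..next_in P x}) - ?\<Xi> x (next_in P x))
        \<le> B * (next_in P x - x) powr ?\<theta>"
      unfolding B_def using holder_bound_subinterval[OF W \<open>a \<le> x\<close> nx(3)]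
        holder_bound_subinterval[OF X \<open>a \<le> x\<close> nx(3)] pos by (intro young_germ_sum_bound)
    also have "(next_in P x - x) powr ?\<theta> = (next_in P x - x) powr (?\<theta> - 1) * (next_in P x - x)"
      using nx by (simp add: powr_diff)
    also have "\<dots> \<le> \<eta> powr (?\<theta> - 1) * (next_in P x - x)"
      using mesh x nx pos unfolding mesh_below_def by (intro mult_right_mono powr_mono2) (auto simp: less_imp_le)
    finally show ?thesis using \<open>0 \<le> B\<close> by (simp add: mult.assoc mult_left_mono)
  qed
  have "norm (germ_sum ?\<Xi> b R - germ_sum ?\<Xi> b P)
      = norm (\<Sum>x\<in>P-{b}. germ_sum ?\<Xi> (next_in P x) (R \<inter> {x..next_in P x}) - ?\<Xi> x (next_in P x))"
    unfolding germ_sum_refinement[OF P R PR] by (simp add: germ_sum_def[of _ b P] sum_subtractf)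
  also have "\<dots> \<le> (\<Sum>x\<in>P-{b}. B * \<eta> powr (?\<theta> - 1) * (next_in P x - x))"
    by (rule order_trans[OF norm_sum sum_mono]) (rule block)
  also have "\<dots> = B * \<eta> powr (?\<theta> - 1) * (b - a)"
    using sum_next_in_minus[OF P ab] by (simp only: sum_distrib_left[symmetric])
  finally show ?thesis unfolding B_def .
qed

lemma young_germ_sums_close:
  assumes W: "holder_bound Kw \<gamma> a b W" and X: "holder_bound Kx \<alpha> a b X"
    and pos: "0 < \<alpha>" "0 < \<gamma>" "1 < \<alpha> + \<gamma>" and ab: "a < b"
    and P: "fin_partition a b P" "mesh_below P b \<eta>" and Q: "fin_partition a b Q" "mesh_below Q b \<eta>"
  shows "norm (germ_sum (young_germ W X) b P - germ_sum (young_germ W X) b Q)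
           \<le> 2 * (sewing_const (\<alpha> + \<gamma>) * Kw * Kx * \<eta> powr (\<alpha> + \<gamma> - 1) * (b - a))"
proof -
  let ?S = "germ_sum (young_germ W X) b"
  have PQ: "fin_partition a b (P \<union> Q)" using P Q by (auto simp: fin_partition_def)
  note bound = young_germ_refinement_bound[OF W X pos _ PQ _ _ ab]
  have "norm (?S P - ?S Q) \<le> norm (?S (P \<union> Q) - ?S Q) + norm (?S (P \<union> Q) - ?S P)"
    using norm_triangle_ineq4[of "?S (P \<union> Q) - ?S Q" "?S (P \<union> Q) - ?S P"] by simp
  then show ?thesis
    using bound[OF P(1) Un_upper1 P(2)] bound[OF Q(1) Un_upper2 Q(2)] by simp
qed

lemma young_germ_has_integral:
  fixes W :: "real \<Rightarrow> ('v::real_normed_vector \<Rightarrow>\<^sub>L 'u::banach)"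
  assumes W: "holder_bound Kw \<gamma> a b W" and X: "holder_bound Kx \<alpha> a b X"
    and pos: "0 < \<alpha>" "0 < \<gamma>" "1 < \<alpha> + \<gamma>" and ab: "a \<le> b"
  shows "\<exists>I. has_germ_integral (young_germ W X) a b I"
proof (cases "a = b")
  case True
  then have "has_germ_integral (young_germ W X) a b 0"
    using fin_partition_singleton[of b] by (auto simp: has_germ_integral_def germ_sum_def)
  then show ?thesis by blast
next
  case False
  then have ab: "a < b" using ab by simp
  let ?S = "germ_sum (young_germ W X) b"
  define C where "C = 2 * sewing_const (\<alpha> + \<gamma>) * Kw * Kx * (b - a)"
  have C: "0 \<le> C" using sewing_const_nonneg[OF pos(3)] W X ab unfolding C_def holder_bound_def by simp
  have close: "norm (?S P - ?S Q) \<le> C * \<eta> powr (\<alpha> + \<gamma> - 1)"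
    if "fin_partition a b P" "mesh_below P b \<eta>" "fin_partition a b Q" "mesh_below Q b \<eta>" for P Q \<eta>
    using young_germ_sums_close[OF W X pos ab that] unfolding C_def by (simp add: algebra_simps)
  show ?thesis
    unfolding has_germ_integral_def
  proof (rule fine_limit_exists[where fine_part = "\<lambda>Q \<eta>. fin_partition a b Q \<and> mesh_below Q b \<eta>"])
    show "\<exists>Q. fin_partition a b Q \<and> mesh_below Q b \<eta>" if "0 < \<eta>" for \<eta>
      using fin_partition_fine_exists[OF less_imp_le[OF ab] that] by blast
    show "\<exists>\<eta>>0. \<forall>P Q. fin_partition a b P \<and> mesh_below P b \<eta> \<longrightarrow> fin_partition a b Q \<and> mesh_below Q b \<eta> \<longrightarrow>
             norm (?S P - ?S Q) < \<epsilon>" if "0 < \<epsilon>" for \<epsilon>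
    proof -
      define \<eta> where "\<eta> = (\<epsilon> / (C + 1)) powr (1 / (\<alpha> + \<gamma> - 1))"
      have "0 < \<eta>" unfolding \<eta>_def using \<open>0 < \<epsilon>\<close> C by simp
      have "C * \<eta> powr (\<alpha> + \<gamma> - 1) = C * (\<epsilon> / (C + 1))"
        unfolding \<eta>_def using \<open>0 < \<epsilon>\<close> C pos(3) by (simp add: powr_powr)
      also have "\<dots> < \<epsilon>" using \<open>0 < \<epsilon>\<close> C by (simp add: field_simps)
      finally have small: "C * \<eta> powr (\<alpha> + \<gamma> - 1) < \<epsilon>" .
      show ?thesis
      proof (intro exI[of _ \<eta>] conjI allI impI)
        fix P Q assume "fin_partition a b P \<and> mesh_below P b \<eta>" "fin_partition a b Q \<and> mesh_below Q b \<eta>"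
        then show "norm (?S P - ?S Q) < \<epsilon>" using close[of P \<eta> Q] small by linarith
      qed (rule \<open>0 < \<eta>\<close>)
    qed
  qed (blast intro: mesh_below_mono)
qed

lemma young_germ_integral_bound:
  assumes W: "holder_bound Kw \<gamma> a b W" and X: "holder_bound Kx \<alpha> a b X"
    and pos: "0 < \<alpha>" "0 < \<gamma>" "1 < \<alpha> + \<gamma>"
    and ab: "a \<le> b" and I: "has_germ_integral (young_germ W X) a b I"
  shows "norm (I - young_germ W X a b) \<le> sewing_const (\<alpha> + \<gamma>) * Kw * Kx * (b - a) powr (\<alpha> + \<gamma>)"
proof (rule field_le_epsilon)
  fix e :: real assume "0 < e"
  then obtain \<eta> where \<eta>: "0 < \<eta>"
    "\<forall>Q. fin_partition a b Q \<and> mesh_below Q b \<eta> \<longrightarrow> norm (germ_sum (young_germ W X) b Q - I) < e"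
    using I unfolding has_germ_integral_def by blast
  obtain Q where Q: "fin_partition a b Q" "mesh_below Q b \<eta>" using fin_partition_fine_exists[OF ab \<eta>(1)] .
  let ?S = "germ_sum (young_germ W X) b Q"
  have "I - young_germ W X a b = (?S - young_germ W X a b) - (?S - I)" by simp
  then have "norm (I - young_germ W X a b) \<le> norm (?S - young_germ W X a b) + norm (?S - I)"
    by (metis norm_triangle_ineq4)
  moreover have "norm (?S - I) < e" using \<eta>(2) Q by blast
  moreover have "norm (?S - young_germ W X a b) \<le> sewing_const (\<alpha> + \<gamma>) * Kw * Kx * (b - a) powr (\<alpha> + \<gamma>)"
    by (rule young_germ_sum_bound[OF W X pos Q(1)])
  ultimately show "norm (I - young_germ W X a b) \<le> sewing_const (\<alpha> + \<gamma>) * Kw * Kx * (b - a) powr (\<alpha> + \<gamma>) + e"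
    by linarith
qed


definition young_integral ::
  "(real \<Rightarrow> ('v::real_normed_vector \<Rightarrow>\<^sub>L 'u::real_normed_vector)) \<Rightarrow> (real \<Rightarrow> 'v) \<Rightarrow> real \<Rightarrow> real \<Rightarrow> 'u" where
  "young_integral W X a b = (SOME I. has_germ_integral (young_germ W X) a b I)"

lemma young_integral_cong:
  assumes "\<And>x. x \<in> {a..b} \<Longrightarrow> W x = W' x"
  shows "young_integral W X a b = young_integral W' X a b"
proof -
  have "has_germ_integral (young_germ W X) a b = has_germ_integral (young_germ W' X) a b"
    by (rule has_germ_integral_cong) (use assms in \<open>auto simp: young_germ_def fun_eq_iff\<close>)
  then show ?thesis unfolding young_integral_def by simp
qed

context
  fixes W :: "real \<Rightarrow> ('v::real_normed_vector \<Rightarrow>\<^sub>L 'u::banach)" and X :: "real \<Rightarrow> 'v"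
    and Kw Kx \<alpha> \<gamma> T :: real
  assumes W: "holder_bound Kw \<gamma> 0 T W" and X: "holder_bound Kx \<alpha> 0 T X"
    and pos: "0 < \<alpha>" "0 < \<gamma>" "1 < \<alpha> + \<gamma>"
begin

lemma has_germ_integral_young_integral:
  assumes "0 \<le> s" "s \<le> t" "t \<le> T"
  shows "has_germ_integral (young_germ W X) s t (young_integral W X s t)"
proof -
  have "\<exists>I. has_germ_integral (young_germ W X) s t I"
    by (rule young_germ_has_integral[OF holder_bound_subinterval[OF W] holder_bound_subinterval[OF X] pos])
      (use assms in auto)
  then show ?thesis unfolding young_integral_def by (rule someI_ex)
qed

lemma young_integral_same_point:
  assumes "0 \<le> s" "s \<le> T"
  shows "young_integral W X s s = 0"
proof -
  have "has_germ_integral (young_germ W X) s s 0"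
    using fin_partition_singleton[of s] by (auto simp: has_germ_integral_def germ_sum_def)
  then show ?thesis
    using has_germ_integral_unique[OF order_refl has_germ_integral_young_integral] assms by blast
qed

lemma young_integral_additive:
  assumes "0 \<le> a" "a \<le> c" "c \<le> b" "b \<le> T"
  shows "young_integral W X a b = young_integral W X a c + young_integral W X c b"
  by (rule has_germ_integral_additive[OF assms(2,3)]) (rule has_germ_integral_young_integral; use assms in auto)+

text \<open>The increment over [s,t] is the germ W s (X t - X s), of order (t - s) powr \<alpha>, plus the sewing
  remainder of order (t - s) powr (\<alpha> + \<gamma>).\<close>

lemma young_integral_increment_bound:
  assumes st: "0 \<le> s" "s \<le> t" "t \<le> T"
  shows "norm (young_integral W X 0 t - young_integral W X 0 s)
           \<le> ((norm (W 0) + Kw * T powr \<gamma>) * Kx + sewing_const (\<alpha> + \<gamma>) * Kw * Kx * T powr \<gamma>) * (t - s) powr \<alpha>"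
proof -
  define B where "B = sewing_const (\<alpha> + \<gamma>) * Kw * Kx"
  have Kn: "0 \<le> Kw" "0 \<le> Kx" using W X by (auto simp: holder_bound_def)
  have "0 \<le> B" using sewing_const_nonneg[OF pos(3)] Kn unfolding B_def by simp
  have "young_integral W X 0 t - young_integral W X 0 s = young_integral W X s t"
    using young_integral_additive[of 0 s t] st by simp
  moreover have "norm (young_integral W X s t - young_germ W X s t) \<le> B * (t - s) powr (\<alpha> + \<gamma>)"
    unfolding B_def using holder_bound_subinterval[OF W] holder_bound_subinterval[OF X] st
    by (intro young_germ_integral_bound[OF _ _ pos _ has_germ_integral_young_integral]) auto
  moreover have "norm (young_germ W X s t) \<le> (norm (W 0) + Kw * T powr \<gamma>) * (Kx * (t - s) powr \<alpha>)"
  proof -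
    have "0 \<in> {0..T}" "s \<in> {0..T}" "t \<in> {0..T}" using st by auto
    then have "norm (W s - W 0) \<le> Kw * \<bar>s - 0\<bar> powr \<gamma>" "norm (X t - X s) \<le> Kx * \<bar>t - s\<bar> powr \<alpha>"
      using W X unfolding holder_bound_def by blast+
    moreover have "Kw * \<bar>s - 0\<bar> powr \<gamma> \<le> Kw * T powr \<gamma>"
      using st pos Kn by (intro mult_left_mono powr_mono2) auto
    ultimately have "norm (W s) \<le> norm (W 0) + Kw * T powr \<gamma>" "norm (X t - X s) \<le> Kx * (t - s) powr \<alpha>"
      using norm_triangle_ineq2[of "W s" "W 0"] st by auto
    then show ?thesis
      using norm_blinfun[of "W s" "X t - X s"] by (simp add: young_germ_def) (meson mult_mono norm_ge_zero order_trans)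
  qed
  moreover have "B * (t - s) powr (\<alpha> + \<gamma>) \<le> B * T powr \<gamma> * (t - s) powr \<alpha>"
  proof -
    have "(t - s) powr \<gamma> \<le> T powr \<gamma>" using st pos by (intro powr_mono2) auto
    then have "(t - s) powr \<alpha> * (t - s) powr \<gamma> \<le> T powr \<gamma> * (t - s) powr \<alpha>"
      by (metis mult.commute mult_left_mono powr_ge_zero)
    then show ?thesis using mult_left_mono[OF _ \<open>0 \<le> B\<close>] by (simp add: powr_add mult.assoc)
  qed
  ultimately show ?thesis
    using norm_triangle_sub[of "young_integral W X s t" "young_germ W X s t"] unfolding B_def
    by (simp add: algebra_simps)
qed

lemma holder_on_young_integral: "holder_on \<alpha> T (\<lambda>t. young_integral W X 0 t)"
  unfolding holder_on_def
proof (intro exI ballI)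
  let ?M = "(norm (W 0) + Kw * T powr \<gamma>) * Kx + sewing_const (\<alpha> + \<gamma>) * Kw * Kx * T powr \<gamma>"
  fix s t assume st: "s \<in> {0..T}" "t \<in> {0..T}"
  show "norm (young_integral W X 0 t - young_integral W X 0 s) \<le> ?M * \<bar>t - s\<bar> powr \<alpha>"
  proof (cases "s \<le> t")
    case True then show ?thesis using young_integral_increment_bound[of s t] st by simp
  next
    case False
    then show ?thesis using young_integral_increment_bound[of t s] st
      by (simp add: norm_minus_commute abs_minus_commute)
  qed
qed

end

section \<open>The delayed equation\<close>

text \<open>After N + 1 iterations with N \<delta> \<ge> T any two starting paths lead to the same path, which is
  therefore the unique fixed point.\<close>

lemma delayed_map_unique_fixpoint:
  fixes \<Phi> :: "(real \<Rightarrow> 'a) \<Rightarrow> real \<Rightarrow> 'a"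
  assumes "0 < \<delta>" and "P Y0"
    and closed: "\<And>Y. P Y \<Longrightarrow> P (\<Phi> Y)"
    and start: "\<And>Y. P Y \<Longrightarrow> \<Phi> Y 0 = c"
    and delay: "\<And>Y Y' r. P Y \<Longrightarrow> P Y' \<Longrightarrow> 0 \<le> r \<Longrightarrow> \<forall>x\<in>{0..r}. Y x = Y' x \<Longrightarrow>
                  \<forall>x\<in>{0..r + \<delta>}. \<Phi> Y x = \<Phi> Y' x"
    and determined: "\<And>Y Y'. P Y \<Longrightarrow> P Y' \<Longrightarrow> \<forall>x\<in>{0..T}. Y x = Y' x \<Longrightarrow> Y = Y'"
  shows "\<exists>!Y. P Y \<and> \<Phi> Y = Y"
proof -
  have iterate: "P ((\<Phi> ^^ n) Y)" if "P Y" for n Y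
    using that closed by (induction n) auto
  have agree: "\<forall>x\<in>{0..real k * \<delta>}. (\<Phi> ^^ Suc k) Y x = (\<Phi> ^^ Suc k) Y' x"
    if "P Y" "P Y'" for k Y Y'
  proof (induction k)
    case 0
    then show ?case using start that by simp
  next
    case (Suc k)
    have "\<forall>x\<in>{0..real k * \<delta> + \<delta>}. \<Phi> ((\<Phi> ^^ Suc k) Y) x = \<Phi> ((\<Phi> ^^ Suc k) Y') x"
      using delay[OF iterate iterate _ Suc.IH] that \<open>0 < \<delta>\<close> by simp
    then show ?case by (simp add: algebra_simps)
  qed
  obtain N :: nat where "T / \<delta> < N" using reals_Archimedean2 by blast
  then have "T \<le> real N * \<delta>" using \<open>0 < \<delta>\<close> by (simp add: field_simps)
  then have forget: "(\<Phi> ^^ Suc N) Y = (\<Phi> ^^ Suc N) Y'" if "P Y" "P Y'" for Y Y'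
    using agree[OF that, of N] by (intro determined iterate that) auto
  define Z where "Z = (\<Phi> ^^ Suc N) Y0"
  show ?thesis
  proof (rule ex1I[of _ Z])
    have "\<Phi> Z = (\<Phi> ^^ Suc N) (\<Phi> Y0)" unfolding Z_def by (rule funpow_swap1)
    also have "\<dots> = Z" unfolding Z_def by (rule forget[OF closed[OF \<open>P Y0\<close>] \<open>P Y0\<close>])
    finally show "P Z \<and> \<Phi> Z = Z" unfolding Z_def using iterate[OF \<open>P Y0\<close>] by blast
    fix Y assume Y: "P Y \<and> \<Phi> Y = Y"
    then have "(\<Phi> ^^ Suc N) Y = Y" by (induction N) auto
    then show "Y = Z" using forget[of Y Y0] Y \<open>P Y0\<close> unfolding Z_def by simp
  qed
qed

lemma holder_path_eq_on_prefix:
  assumes "holder_path \<alpha> T Y" "holder_path \<alpha> T Y'" "\<forall>x\<in>{0..r}. Y x = Y' x" "0 \<le> r" "z \<le> r"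
  shows "Y z = Y' z"
proof -
  have "Y z = Y (max 0 (min T z))" "Y' z = Y' (max 0 (min T z))"
    using assms(1,2) unfolding holder_path_def by auto
  moreover have "max 0 (min T z) \<in> {0..r}" using assms(4,5) by auto
  ultimately show ?thesis using assms(3) by simp
qed

lemma holder_path_eqI:
  assumes "holder_path \<alpha> T Y" "holder_path \<alpha> T Y'" "\<forall>x\<in>{0..T}. Y x = Y' x" "0 \<le> T"
  shows "Y = Y'"
proof
  fix z
  have "Y z = Y (max 0 (min T z))" "Y' z = Y' (max 0 (min T z))"
    using assms(1,2) unfolding holder_path_def by auto
  then show "Y z = Y' z" using assms(3,4) by simp
qed

locale young_equation =
  fixes F :: "real \<Rightarrow> (real \<Rightarrow> 'u::banach) \<Rightarrow> ('v::banach \<Rightarrow>\<^sub>L 'u)"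
    and X :: "real \<Rightarrow> 'v" and T \<alpha> \<gamma> \<delta> :: real
  assumes T_pos: "0 < T" and \<alpha>_pos: "0 < \<alpha>" and \<gamma>_pos: "0 < \<gamma>" and exponents: "1 < \<alpha> + \<gamma>"
    and \<delta>_pos: "0 < \<delta>"
    and F_non_anticipating: "non_anticipating \<alpha> T \<delta> F"
    and F_holder: "\<And>Z. holder_path \<alpha> T Z \<Longrightarrow> holder_on \<gamma> T (\<lambda>t. F t Z)"
    and X_holder: "holder_on \<alpha> T X"
begin

text \<open>Clamping t to [0, T] makes picard y0 Y constant outside [0, T], as holder_path requires.\<close>

definition picard :: "'u \<Rightarrow> (real \<Rightarrow> 'u) \<Rightarrow> real \<Rightarrow> 'u" where
  "picard y0 Y t = y0 + young_integral (\<lambda>u. F u Y) X 0 (max 0 (min T t))"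

lemma holder_bounds_of_path:
  assumes "holder_path \<alpha> T Y"
  obtains Kw Kx where "holder_bound Kw \<gamma> 0 T (\<lambda>u. F u Y)" "holder_bound Kx \<alpha> 0 T X"
  using holder_on_imp_holder_bound[OF F_holder[OF assms]] holder_on_imp_holder_bound[OF X_holder] by metis

lemma holder_path_picard:
  assumes "holder_path \<alpha> T Y"
  shows "holder_path \<alpha> T (picard y0 Y)"
proof -
  obtain Kw Kx where "holder_bound Kw \<gamma> 0 T (\<lambda>u. F u Y)" "holder_bound Kx \<alpha> 0 T X"
    using holder_bounds_of_path[OF assms] .
  then have "holder_on \<alpha> T (\<lambda>t. young_integral (\<lambda>u. F u Y) X 0 t)"
    using holder_on_young_integral \<alpha>_pos \<gamma>_pos exponents by blast
  then have "holder_on \<alpha> T (picard y0 Y)"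
    unfolding holder_on_def picard_def by simp
  moreover have "picard y0 Y x = picard y0 Y (max 0 (min T x))" for x
    unfolding picard_def using T_pos by (simp add: max_def min_def)
  ultimately show ?thesis unfolding holder_path_def by blast
qed

lemma picard_at_zero:
  assumes "holder_path \<alpha> T Y"
  shows "picard y0 Y 0 = y0"
proof -
  obtain Kw Kx where "holder_bound Kw \<gamma> 0 T (\<lambda>u. F u Y)" "holder_bound Kx \<alpha> 0 T X"
    using holder_bounds_of_path[OF assms] .
  then show ?thesis unfolding picard_def
    using young_integral_same_point[OF _ _ \<alpha>_pos \<gamma>_pos exponents order_refl less_imp_le[OF T_pos]]
    by simp
qed

lemma picard_delay:
  assumes Y: "holder_path \<alpha> T Y" "holder_path \<alpha> T Y'" and "0 \<le> r" and agree: "\<forall>x\<in>{0..r}. Y x = Y' x"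
  shows "\<forall>x\<in>{0..r + \<delta>}. picard y0 Y x = picard y0 Y' x"
proof
  fix x assume x: "x \<in> {0..r + \<delta>}"
  have "F u Y = F u Y'" if u: "u \<in> {0..max 0 (min T x)}" for u
  proof -
    define m where "m = max (u - \<delta>) 0"
    have "m \<le> r" using x u \<open>0 \<le> r\<close> by (auto simp: m_def)
    have "stopped Y m = stopped Y' m"
      unfolding stopped_def
      by (rule ext, rule holder_path_eq_on_prefix[OF Y agree \<open>0 \<le> r\<close>]) (use \<open>m \<le> r\<close> in auto)
    moreover have "u \<in> {0..T}" using u T_pos by auto
    ultimately show ?thesis
      using F_non_anticipating Y unfolding non_anticipating_def m_def by metis
  qed
  then show "picard y0 Y x = picard y0 Y' x"
    unfolding picard_def
    using young_integral_cong[of 0 "max 0 (min T x)" "\<lambda>u. F u Y" "\<lambda>u. F u Y'"] by simp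
qed

lemma solves_iff_picard_fixpoint:
  assumes Y: "holder_path \<alpha> T Y"
  shows "(\<forall>t\<in>{0..T}. has_young_integral (\<lambda>u. F u Y) X 0 t (Y t - y0)) \<longleftrightarrow> picard y0 Y = Y"
proof -
  obtain Kw Kx where "holder_bound Kw \<gamma> 0 T (\<lambda>u. F u Y)" "holder_bound Kx \<alpha> 0 T X"
    using holder_bounds_of_path[OF Y] .
  then have young: "has_young_integral (\<lambda>u. F u Y) X 0 t (young_integral (\<lambda>u. F u Y) X 0 t)"
    if "t \<in> {0..T}" for t
    using has_germ_integral_imp_has_young_integral has_germ_integral_young_integral
      \<alpha>_pos \<gamma>_pos exponents that by fastforce
  have picard_on: "picard y0 Y t = y0 + young_integral (\<lambda>u. F u Y) X 0 t" if "t \<in> {0..T}" for t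
    using that unfolding picard_def by simp
  show ?thesis
  proof
    assume H: "\<forall>t\<in>{0..T}. has_young_integral (\<lambda>u. F u Y) X 0 t (Y t - y0)"
    have "\<forall>t\<in>{0..T}. picard y0 Y t = Y t"
    proof
      fix t assume t: "t \<in> {0..T}"
      have "Y t - y0 = young_integral (\<lambda>u. F u Y) X 0 t"
        by (rule has_young_integral_unique[OF _ H[rule_format, OF t] young[OF t]]) (use t in simp)
      then show "picard y0 Y t = Y t" using picard_on[OF t] by (simp add: algebra_simps)
    qed
    then show "picard y0 Y = Y"
      using holder_path_eqI[OF holder_path_picard[OF Y] Y] T_pos by simp
  next
    assume fixpoint: "picard y0 Y = Y"
    show "\<forall>t\<in>{0..T}. has_young_integral (\<lambda>u. F u Y) X 0 t (Y t - y0)"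
    proof
      fix t assume t: "t \<in> {0..T}"
      have "Y t - y0 = young_integral (\<lambda>u. F u Y) X 0 t" using picard_on[OF t] fixpoint by simp
      then show "has_young_integral (\<lambda>u. F u Y) X 0 t (Y t - y0)" using young[OF t] by simp
    qed
  qed
qed

theorem unique_solution:
  "\<exists>!Y. holder_path \<alpha> T Y \<and> (\<forall>t\<in>{0..T}. has_young_integral (\<lambda>u. F u Y) X 0 t (Y t - y0))"
proof -
  have "holder_path \<alpha> T (\<lambda>_. y0)" unfolding holder_path_def holder_on_def by (auto intro: exI[of _ 0])
  then have "\<exists>!Y. holder_path \<alpha> T Y \<and> picard y0 Y = Y"
  proof (rule delayed_map_unique_fixpoint[OF \<delta>_pos])
    show "Y = Y'" if "holder_path \<alpha> T Y" "holder_path \<alpha> T Y'" "\<forall>x\<in>{0..T}. Y x = Y' x" for Y Y'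
      using holder_path_eqI[OF that] T_pos by simp
    show "holder_path \<alpha> T (picard y0 Y)" if "holder_path \<alpha> T Y" for Y
      using that by (rule holder_path_picard)
    show "picard y0 Y 0 = y0" if "holder_path \<alpha> T Y" for Y
      using that by (rule picard_at_zero)
    show "\<forall>x\<in>{0..r + \<delta>}. picard y0 Y x = picard y0 Y' x"
      if "holder_path \<alpha> T Y" "holder_path \<alpha> T Y'" "0 \<le> r" "\<forall>x\<in>{0..r}. Y x = Y' x" for Y Y' r
      using that by (rule picard_delay)
  qed
  moreover have "holder_path \<alpha> T Y \<and> (\<forall>t\<in>{0..T}. has_young_integral (\<lambda>u. F u Y) X 0 t (Y t - y0))
      \<longleftrightarrow> holder_path \<alpha> T Y \<and> picard y0 Y = Y" for Y
    using solves_iff_picard_fixpoint by blast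
  ultimately show ?thesis by simp
qed

end

theorem theorem6p2:
  fixes F :: "real \<Rightarrow> (real \<Rightarrow> 'u::banach) \<Rightarrow> ('v::banach \<Rightarrow>\<^sub>L 'u)"
    and X :: "real \<Rightarrow> 'v"
    and T \<alpha> \<gamma> \<delta> :: real
    and y0 :: 'u
  assumes "T > 0"
    and "0 < \<alpha>" "\<alpha> \<le> 1" "0 < \<gamma>" "\<gamma> \<le> 1" "\<alpha> + \<gamma> > 1"
    and "\<delta> > 0"
    and "non_anticipating \<alpha> T \<delta> F"
    and "\<forall>Z. holder_path \<alpha> T Z \<longrightarrow> holder_on \<gamma> T (\<lambda>t. F t Z)"
    and "holder_on \<alpha> T X"
  shows "\<exists>!Y. holder_path \<alpha> T Y \<and>
           (\<forall>t\<in>{0..T}. has_young_integral (\<lambda>u. F u Y) X 0 t (Y t - y0))"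
proof -
  interpret young_equation F X T \<alpha> \<gamma> \<delta>
    by unfold_locales (use assms in auto)
  show ?thesis by (rule unique_solution)
qed

end
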